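(* Suppose $s_\alpha\in R$ and $w\in W$ satisfy $\ell(s_\alpha w)=\ell(w)+1$. Then (1) $s_\alpha w>w$; and (2) if $s_i$ is a simple reflection with $s_i\neq s_\alpha$ and $s_iw>w$, then $s_is_\alpha w>s_\alpha w$.
   Context: $G$ is a complex reductive linear algebraic group, $B$ is a Borel subgroup, $T\subseteq B$ is a maximal torus, and $W=N(T)/T$ is the Weyl group, with simple reflections $S=\{s_i\}$ and reflections $R=\bigcup_{w\in W}wSw^{-1}$. $s_\alpha$ denotes the reflection associated to the positive root $\alpha$. $\ell(w)$ is the minimal length of a factorization of $w$ into simple reflections. $w\ge v$ in the Bruhat order iff $\overline{BwB/B}\supseteq BvB/B$; equivalently, some (any) reduced word for $w$ contains a subword that is a reduced word for $v$. *)

theory Defs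
  imports "HOL-Analysis.Analysis" "HOL-Library.Sublist"
begin

text \<open>The Weyl group W of (G,B,T) is the Weyl group of the (reduced, crystallographic)
root system R of (G,T), realised as a group of orthogonal transformations of a real
Euclidean space; B determines a simple system (base) Delta, whose reflections are S.\<close>

definition refl :: "'a::euclidean_space \<Rightarrow> 'a \<Rightarrow> 'a" where
  "refl \<alpha> x = x - (2 * (x \<bullet> \<alpha>) / (\<alpha> \<bullet> \<alpha>)) *\<^sub>R \<alpha>"

definition root_system :: "'a::euclidean_space set \<Rightarrow> bool" where
  "root_system R \<longleftrightarrow> finite R \<and> 0 \<notin> R
     \<and> (\<forall>\<alpha>\<in>R. refl \<alpha> ` R \<subseteq> R)
     \<and> (\<forall>\<alpha>\<in>R. \<forall>\<beta>\<in>R. 2 * (\<beta> \<bullet> \<alpha>) / (\<alpha> \<bullet> \<alpha>) \<in> \<int>)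
     \<and> (\<forall>\<alpha>\<in>R. \<forall>c::real. c *\<^sub>R \<alpha> \<in> R \<longrightarrow> c = 1 \<or> c = -1)"

definition simple_system :: "'a::euclidean_space set \<Rightarrow> 'a set \<Rightarrow> bool" where
  "simple_system R \<Delta> \<longleftrightarrow> \<Delta> \<subseteq> R \<and> independent \<Delta>
     \<and> (\<forall>\<beta>\<in>R. \<exists>c. \<beta> = (\<Sum>\<delta>\<in>\<Delta>. c \<delta> *\<^sub>R \<delta>)
                 \<and> ((\<forall>\<delta>\<in>\<Delta>. c \<delta> \<ge> 0) \<or> (\<forall>\<delta>\<in>\<Delta>. c \<delta> \<le> 0)))"

definition positive_roots :: "'a::euclidean_space set \<Rightarrow> 'a set \<Rightarrow> 'a set" where
  "positive_roots R \<Delta> = {\<beta>\<in>R. \<exists>c. \<beta> = (\<Sum>\<delta>\<in>\<Delta>. c \<delta> *\<^sub>R \<delta>) \<and> (\<forall>\<delta>\<in>\<Delta>. c \<delta> \<ge> 0)}"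

inductive_set weyl_group :: "'a::euclidean_space set \<Rightarrow> ('a \<Rightarrow> 'a) set" for R where
  weyl_id: "id \<in> weyl_group R"
| weyl_step: "\<alpha> \<in> R \<Longrightarrow> w \<in> weyl_group R \<Longrightarrow> refl \<alpha> \<circ> w \<in> weyl_group R"

definition word_prod :: "('a \<Rightarrow> 'a) list \<Rightarrow> 'a \<Rightarrow> 'a" where
  "word_prod ws = foldr (\<circ>) ws id"

definition coxeter_length :: "'a::euclidean_space set \<Rightarrow> ('a \<Rightarrow> 'a) \<Rightarrow> nat" where
  "coxeter_length \<Delta> w =
     (LEAST n. \<exists>ws. set ws \<subseteq> refl ` \<Delta> \<and> length ws = n \<and> word_prod ws = w)"

definition reduced_word :: "'a::euclidean_space set \<Rightarrow> ('a \<Rightarrow> 'a) list \<Rightarrow> ('a \<Rightarrow> 'a) \<Rightarrow> bool" where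
  "reduced_word \<Delta> ws w \<longleftrightarrow> set ws \<subseteq> refl ` \<Delta> \<and> word_prod ws = w
     \<and> length ws = coxeter_length \<Delta> w"

definition bruhat_le :: "'a::euclidean_space set \<Rightarrow> ('a \<Rightarrow> 'a) \<Rightarrow> ('a \<Rightarrow> 'a) \<Rightarrow> bool" where
  "bruhat_le \<Delta> v w \<longleftrightarrow> (\<exists>ws us. reduced_word \<Delta> ws w \<and> reduced_word \<Delta> us v \<and> subseq us ws)"

definition bruhat_lt :: "'a::euclidean_space set \<Rightarrow> ('a \<Rightarrow> 'a) \<Rightarrow> ('a \<Rightarrow> 'a) \<Rightarrow> bool" where
  "bruhat_lt \<Delta> v w \<longleftrightarrow> bruhat_le \<Delta> v w \<and> v \<noteq> w"

end

theory Submission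
  imports Defs
begin

(* For u in W and a positive root beta, the sign of u^-1 beta decides whether s_beta shortens u.
   The tool is the strong exchange condition: if u^-1 beta < 0, then s_beta u is obtained from any
   word for u by deleting one letter. It is proved by induction on the word, using that a simple
   reflection s_delta permutes the positive roots other than delta; that every reflection is a
   word in S comes from conjugating positive roots down to simple ones, decreasing the height.
   Part (1): for v = s_alpha w we have l(s_alpha v) < l(v), hence v^-1 alpha < 0, and deleting a
   letter from a reduced word of v gives a word for w of length l(w): a reduced subword.
   Part (2): it suffices that l(s_i v) = l(v) + 1. Otherwise v has a reduced word starting with
   s_i, and deleting a letter from it yields w; deleting the first letter forces s_alpha = s_i,
   deleting any other gives l(s_i w) < l(w), contradicting s_i w > w. *)

(* Since x / 0 = 0, refl 0 is the identity, so the identities below need no hypothesis a \<noteq> 0. *)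
lemma refl_zero [simp]: "refl 0 = id"
  by (simp add: refl_def fun_eq_iff)

lemma refl_refl [simp]: "refl a (refl a x) = x"
proof (cases "a = 0")
  case False
  then have "refl a x \<bullet> a = - (x \<bullet> a)"
    by (simp add: refl_def inner_diff_left)
  then show ?thesis
    by (simp add: refl_def[of a "refl a x"]) (simp add: refl_def)
qed simp

lemma refl_comp_refl [simp]: "refl a \<circ> refl a = id"
  by (simp add: fun_eq_iff)

lemma refl_comp_eq_iff: "refl a \<circ> f = g \<longleftrightarrow> f = refl a \<circ> g"
  unfolding fun_eq_iff comp_apply by (metis refl_refl)

lemma linear_refl: "linear (refl a)"
  by (rule linearI) (simp_all add: refl_def inner_add_left algebra_simps add_divide_distrib)

lemma refl_minus [simp]: "refl a (- x) = - refl a x"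
  using linear_neg[OF linear_refl] .

lemma bij_refl: "bij (refl a)"
  by (rule involuntory_imp_bij) simp

lemma refl_self [simp]: "refl a a = - a"
  by (cases "a = 0") (simp_all add: refl_def scaleR_2)

lemma refl_uminus [simp]: "refl (- a) = refl a"
  by (simp add: refl_def fun_eq_iff)

lemma refl_adjoint: "refl a x \<bullet> y = x \<bullet> refl a y"
  by (simp add: refl_def inner_diff_left inner_diff_right algebra_simps inner_commute)

lemma refl_refl_conj: "refl (refl a b) = refl a \<circ> refl b \<circ> refl a"
proof
  fix x
  let ?k = "2 * (refl a x \<bullet> b) / (b \<bullet> b)"
  have "(refl a \<circ> refl b \<circ> refl a) x = refl a (refl a x - ?k *\<^sub>R b)"
    by (simp add: refl_def)
  also have "\<dots> = x - ?k *\<^sub>R refl a b"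
    using linear_diff[OF linear_refl] linear_scale[OF linear_refl] by (metis refl_refl)
  also have "\<dots> = refl (refl a b) x"
    by (simp add: refl_def[of "refl a b"] refl_adjoint[of a x b, symmetric]
        refl_adjoint[of a "refl a b" b, symmetric] inner_commute)
  finally show "refl (refl a b) x = (refl a \<circ> refl b \<circ> refl a) x" ..
qed

lemma word_prod_Nil [simp]: "word_prod [] = id"
  by (simp add: word_prod_def)

lemma word_prod_Cons [simp]: "word_prod (s # ws) = s \<circ> word_prod ws"
  by (simp add: word_prod_def)

lemma word_prod_append [simp]: "word_prod (ws @ vs) = word_prod ws \<circ> word_prod vs"
  by (induction ws) auto

lemma refl_word_prod_conj:
  "set ws \<subseteq> range refl \<Longrightarrow> refl (word_prod ws a) = word_prod ws \<circ> refl a \<circ> word_prod (rev ws)"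
  by (induction ws) (auto simp: refl_refl_conj o_assoc)

lemma coxeter_length_le:
  "set ws \<subseteq> refl ` \<Delta> \<Longrightarrow> coxeter_length \<Delta> (word_prod ws) \<le> length ws"
  unfolding coxeter_length_def by (rule Least_le) blast

lemma reduced_word_exists:
  assumes "set ws \<subseteq> refl ` \<Delta>"
  obtains vs where "reduced_word \<Delta> vs (word_prod ws)"
proof -
  let ?P = "\<lambda>n. \<exists>vs. set vs \<subseteq> refl ` \<Delta> \<and> length vs = n \<and> word_prod vs = word_prod ws"
  have "?P (length ws)"
    using assms by blast
  then have "?P (LEAST n. ?P n)"
    by (rule LeastI)
  then show thesis
    using that unfolding reduced_word_def coxeter_length_def by blast
qed

lemma reduced_wordI:
  "set ws \<subseteq> refl ` \<Delta> \<Longrightarrow> word_prod ws = u \<Longrightarrow> length ws \<le> coxeter_length \<Delta> u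
    \<Longrightarrow> reduced_word \<Delta> ws u"
  unfolding reduced_word_def using coxeter_length_le le_antisym by blast

lemma coxeter_length_simple_le:
  assumes "\<delta> \<in> \<Delta>" "reduced_word \<Delta> ws u"
  shows "coxeter_length \<Delta> (refl \<delta> \<circ> u) \<le> coxeter_length \<Delta> u + 1"
  using assms coxeter_length_le[of "refl \<delta> # ws" \<Delta>] by (auto simp: reduced_word_def)

lemma bruhat_le_coxeter_length_le:
  "bruhat_le \<Delta> v w \<Longrightarrow> coxeter_length \<Delta> v \<le> coxeter_length \<Delta> w"
  unfolding bruhat_le_def reduced_word_def by (metis list_emb_length)

lemma subseq_Cons_same_length:
  assumes "subseq xs (y # ys)" "length xs = length ys"
  shows "xs = ys \<or> (\<exists>xs'. xs = y # xs' \<and> subseq xs' ys)"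
proof (cases xs)
  case (Cons x xs')
  then show ?thesis
    using assms subseq_same_length[of xs ys] by (cases "x = y") auto
qed (use assms in auto)

lemma set_mono_subseq: "subseq xs ys \<Longrightarrow> set xs \<subseteq> set ys"
  by (auto elim: list_emb_set)

locale based_root_system =
  fixes R \<Delta> :: "'a::euclidean_space set"
  assumes root_system: "root_system R" and simple_system: "simple_system R \<Delta>"
begin

abbreviation S :: "('a \<Rightarrow> 'a) set" where "S \<equiv> refl ` \<Delta>"

lemma root_nonzero: "\<beta> \<in> R \<Longrightarrow> \<beta> \<noteq> 0"
  using root_system by (auto simp: root_system_def)

lemma refl_root: "\<alpha> \<in> R \<Longrightarrow> \<beta> \<in> R \<Longrightarrow> refl \<alpha> \<beta> \<in> R"
  using root_system by (auto simp: root_system_def)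

lemma uminus_root: "\<beta> \<in> R \<Longrightarrow> - \<beta> \<in> R"
  using refl_root[of \<beta> \<beta>] by simp

lemma root_multiple: "\<beta> \<in> R \<Longrightarrow> c *\<^sub>R \<beta> \<in> R \<Longrightarrow> c = 1 \<or> c = -1"
  using root_system by (auto simp: root_system_def)

lemma refl_image_roots:
  assumes "\<alpha> \<in> R"
  shows "refl \<alpha> ` R = R"
proof
  show "refl \<alpha> ` R \<subseteq> R"
    using assms refl_root by blast
  show "R \<subseteq> refl \<alpha> ` R"
  proof
    fix \<beta> assume "\<beta> \<in> R"
    then show "\<beta> \<in> refl \<alpha> ` R"
      using assms refl_root by (metis image_eqI refl_refl)
  qed
qed

lemma simple_roots_subset: "\<Delta> \<subseteq> R"
  using simple_system by (simp add: simple_system_def)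

lemma independent_simple_roots: "independent \<Delta>"
  using simple_system by (simp add: simple_system_def)

lemma finite_simple_roots: "finite \<Delta>"
  using independent_simple_roots independent_explicit by blast

lemma simple_coords_unique:
  assumes "(\<Sum>\<gamma>\<in>\<Delta>. c \<gamma> *\<^sub>R \<gamma>) = (\<Sum>\<gamma>\<in>\<Delta>. d \<gamma> *\<^sub>R \<gamma>)" "\<gamma> \<in> \<Delta>"
  shows "c \<gamma> = d \<gamma>"
proof -
  have "(\<Sum>\<gamma>\<in>\<Delta>. (c \<gamma> - d \<gamma>) *\<^sub>R \<gamma>) = 0"
    using assms(1) by (simp add: scaleR_diff_left sum_subtractf)
  then have "c \<gamma> - d \<gamma> = 0"
    using independent_simple_roots assms(2) unfolding independent_explicit
    by (elim conjE allE[of _ "\<lambda>\<gamma>. c \<gamma> - d \<gamma>"]) auto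
  then show ?thesis
    by simp
qed

lemma sum_simple_single: "(\<Sum>\<gamma>\<in>\<Delta>. (if \<gamma> = \<delta> then k else 0) *\<^sub>R \<gamma>) = k *\<^sub>R \<delta>"
  if "\<delta> \<in> \<Delta>"
proof -
  have "(\<Sum>\<gamma>\<in>\<Delta>. (if \<gamma> = \<delta> then k else 0) *\<^sub>R \<gamma>) = (\<Sum>\<gamma>\<in>\<Delta>. if \<gamma> = \<delta> then k *\<^sub>R \<delta> else 0)"
    by (intro sum.cong) simp_all
  then show ?thesis
    using finite_simple_roots that by simp
qed

lemma simple_root_positive: "\<delta> \<in> \<Delta> \<Longrightarrow> \<delta> \<in> positive_roots R \<Delta>"
  unfolding positive_roots_def
  using simple_roots_subset sum_simple_single[of \<delta> 1]
  by (auto intro!: exI[of _ "\<lambda>\<gamma>. if \<gamma> = \<delta> then 1 else 0"])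

lemma root_positive_or_negative:
  assumes "\<beta> \<in> R"
  shows "\<beta> \<in> positive_roots R \<Delta> \<or> - \<beta> \<in> positive_roots R \<Delta>"
proof -
  obtain c where c: "\<beta> = (\<Sum>\<gamma>\<in>\<Delta>. c \<gamma> *\<^sub>R \<gamma>)" "(\<forall>\<gamma>\<in>\<Delta>. c \<gamma> \<ge> 0) \<or> (\<forall>\<gamma>\<in>\<Delta>. c \<gamma> \<le> 0)"
    using assms simple_system unfolding simple_system_def by blast
  have "- \<beta> = (\<Sum>\<gamma>\<in>\<Delta>. (- c \<gamma>) *\<^sub>R \<gamma>)"
    using c(1) by (simp add: sum_negf)
  from c(2) show ?thesis
  proof
    assume "\<forall>\<gamma>\<in>\<Delta>. c \<gamma> \<ge> 0"
    then show ?thesis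
      using assms c(1) unfolding positive_roots_def by blast
  next
    assume "\<forall>\<gamma>\<in>\<Delta>. c \<gamma> \<le> 0"
    then have "- \<beta> \<in> positive_roots R \<Delta>"
      using uminus_root[OF assms] \<open>- \<beta> = _\<close> unfolding positive_roots_def
      by (intro CollectI conjI exI[of _ "\<lambda>\<gamma>. - c \<gamma>"]) auto
    then show ?thesis ..
  qed
qed

definition height :: "'a \<Rightarrow> real" where
  "height = (SOME h. linear h \<and> (\<forall>\<delta>\<in>\<Delta>. h \<delta> = 1))"

lemma linear_height: "linear height" and height_simple: "\<delta> \<in> \<Delta> \<Longrightarrow> height \<delta> = 1"
proof -
  have "\<exists>h. linear h \<and> (\<forall>\<delta>\<in>\<Delta>. h \<delta> = (1::real))"
    using linear_independent_extend[OF independent_simple_roots, of "\<lambda>_. 1"] by simp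
  then have "linear height \<and> (\<forall>\<delta>\<in>\<Delta>. height \<delta> = 1)"
    unfolding height_def by (rule someI_ex)
  then show "linear height" "\<delta> \<in> \<Delta> \<Longrightarrow> height \<delta> = 1"
    by auto
qed

lemma height_sum: "height (\<Sum>\<gamma>\<in>\<Delta>. c \<gamma> *\<^sub>R \<gamma>) = (\<Sum>\<gamma>\<in>\<Delta>. c \<gamma>)"
  by (simp add: linear_sum[OF linear_height] linear_scale[OF linear_height] height_simple)

lemma positive_root_height: "\<beta> \<in> positive_roots R \<Delta> \<Longrightarrow> 0 < height \<beta>"
proof -
  assume "\<beta> \<in> positive_roots R \<Delta>"
  then obtain c where c: "\<beta> \<in> R" "\<beta> = (\<Sum>\<gamma>\<in>\<Delta>. c \<gamma> *\<^sub>R \<gamma>)" "\<forall>\<gamma>\<in>\<Delta>. c \<gamma> \<ge> 0"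
    unfolding positive_roots_def by blast
  have "height \<beta> \<noteq> 0"
  proof
    assume "height \<beta> = 0"
    then have "\<forall>\<gamma>\<in>\<Delta>. c \<gamma> = 0"
      using c(3) unfolding c(2) height_sum by (simp add: sum_nonneg_eq_0_iff[OF finite_simple_roots])
    then have "\<beta> = 0"
      using c(2) by simp
    with c(1) root_nonzero show False
      by blast
  qed
  moreover have "0 \<le> height \<beta>"
    using c by (simp add: height_sum sum_nonneg)
  ultimately show ?thesis
    by simp
qed

lemma positive_root_uminus: "\<beta> \<in> positive_roots R \<Delta> \<Longrightarrow> - \<beta> \<notin> positive_roots R \<Delta>"
  using positive_root_height[of \<beta>] positive_root_height[of "- \<beta>"] linear_neg[OF linear_height]
  by fastforce

lemma refl_simple_positive:
  assumes "\<delta> \<in> \<Delta>" "\<beta> \<in> positive_roots R \<Delta>" "\<beta> \<noteq> \<delta>"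
  shows "refl \<delta> \<beta> \<in> positive_roots R \<Delta>"
proof (rule ccontr)
  assume "refl \<delta> \<beta> \<notin> positive_roots R \<Delta>"
  moreover have "refl \<delta> \<beta> \<in> R"
    using assms simple_roots_subset refl_root unfolding positive_roots_def by auto
  ultimately have "- refl \<delta> \<beta> \<in> positive_roots R \<Delta>"
    using root_positive_or_negative by blast
  then obtain d where d: "- refl \<delta> \<beta> = (\<Sum>\<gamma>\<in>\<Delta>. d \<gamma> *\<^sub>R \<gamma>)" "\<forall>\<gamma>\<in>\<Delta>. d \<gamma> \<ge> 0"
    unfolding positive_roots_def by blast
  obtain c where c: "\<beta> = (\<Sum>\<gamma>\<in>\<Delta>. c \<gamma> *\<^sub>R \<gamma>)" "\<forall>\<gamma>\<in>\<Delta>. c \<gamma> \<ge> 0"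
    using assms(2) unfolding positive_roots_def by blast
  define k where "k = 2 * (\<beta> \<bullet> \<delta>) / (\<delta> \<bullet> \<delta>)"
  have "(\<Sum>\<gamma>\<in>\<Delta>. (c \<gamma> + d \<gamma>) *\<^sub>R \<gamma>) = \<beta> + - refl \<delta> \<beta>"
    using c(1) d(1) by (simp add: scaleR_add_left sum.distrib)
  also have "\<dots> = (\<Sum>\<gamma>\<in>\<Delta>. (if \<gamma> = \<delta> then k else 0) *\<^sub>R \<gamma>)"
    using assms(1) by (simp add: sum_simple_single refl_def k_def)
  finally have coords: "(\<Sum>\<gamma>\<in>\<Delta>. (c \<gamma> + d \<gamma>) *\<^sub>R \<gamma>) = (\<Sum>\<gamma>\<in>\<Delta>. (if \<gamma> = \<delta> then k else 0) *\<^sub>R \<gamma>)" .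
  have "c \<gamma> = 0" if "\<gamma> \<in> \<Delta>" "\<gamma> \<noteq> \<delta>" for \<gamma>
  proof -
    have "c \<gamma> + d \<gamma> = 0"
      using simple_coords_unique[OF coords that(1)] that(2) by simp
    moreover have "c \<gamma> \<ge> 0" "d \<gamma> \<ge> 0"
      using c(2) d(2) that(1) by auto
    ultimately show ?thesis
      by linarith
  qed
  then have "\<beta> = (\<Sum>\<gamma>\<in>\<Delta>. (if \<gamma> = \<delta> then c \<delta> else 0) *\<^sub>R \<gamma>)"
    unfolding c(1) by (intro sum.cong) auto
  then have "\<beta> = c \<delta> *\<^sub>R \<delta>"
    using assms(1) by (simp add: sum_simple_single)
  then have "c \<delta> = 1"
    using root_multiple[of \<delta> "c \<delta>"] assms c(2) simple_roots_subset unfolding positive_roots_def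
    by force
  then show False
    using \<open>\<beta> = c \<delta> *\<^sub>R \<delta>\<close> assms(3) by simp
qed

lemma positive_root_descent:
  assumes "\<beta> \<in> positive_roots R \<Delta>" "\<beta> \<notin> \<Delta>"
  obtains \<delta> where "\<delta> \<in> \<Delta>" "refl \<delta> \<beta> \<in> positive_roots R \<Delta>" "height (refl \<delta> \<beta>) < height \<beta>"
proof -
  obtain c where c: "\<beta> \<in> R" "\<beta> = (\<Sum>\<gamma>\<in>\<Delta>. c \<gamma> *\<^sub>R \<gamma>)" "\<forall>\<gamma>\<in>\<Delta>. c \<gamma> \<ge> 0"
    using assms(1) unfolding positive_roots_def by blast
  have "0 < \<beta> \<bullet> \<beta>"
    using c(1) root_nonzero by simp
  also have "\<beta> \<bullet> \<beta> = (\<Sum>\<gamma>\<in>\<Delta>. c \<gamma> * (\<gamma> \<bullet> \<beta>))"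
    by (subst (1) c(2)) (simp add: inner_sum_left)
  finally obtain \<delta> where \<delta>: "\<delta> \<in> \<Delta>" "0 < c \<delta> * (\<delta> \<bullet> \<beta>)"
    using sum_nonpos[of \<Delta> "\<lambda>\<gamma>. c \<gamma> * (\<gamma> \<bullet> \<beta>)"] by (meson not_le)
  then have "0 < \<delta> \<bullet> \<beta>"
    using c(3) by (auto simp: zero_less_mult_iff)
  moreover have "0 < \<delta> \<bullet> \<delta>"
    using \<delta>(1) simple_roots_subset root_nonzero by auto
  ultimately have "0 < 2 * (\<beta> \<bullet> \<delta>) / (\<delta> \<bullet> \<delta>)"
    by (simp add: inner_commute)
  then have "height (refl \<delta> \<beta>) < height \<beta>"
    using \<delta>(1) by (simp add: refl_def linear_diff[OF linear_height] linear_scale[OF linear_height]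
        height_simple)
  moreover have "refl \<delta> \<beta> \<in> positive_roots R \<Delta>"
    using refl_simple_positive \<delta>(1) assms by blast
  ultimately show thesis
    using that \<delta>(1) by blast
qed

lemma positive_root_conj_simple:
  assumes "\<beta> \<in> positive_roots R \<Delta>"
  shows "\<exists>ws \<delta>. set ws \<subseteq> S \<and> \<delta> \<in> \<Delta> \<and> \<beta> = word_prod ws \<delta>"
  using assms
proof (induction "card {\<gamma>\<in>R. height \<gamma> < height \<beta>}" arbitrary: \<beta> rule: less_induct)
  case less
  show ?case
  proof (cases "\<beta> \<in> \<Delta>")
    case True
    then show ?thesis
      by (intro exI[of _ "[]"] exI[of _ \<beta>]) simp
  next
    case False
    then obtain \<delta> where \<delta>: "\<delta> \<in> \<Delta>" "refl \<delta> \<beta> \<in> positive_roots R \<Delta>"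
      "height (refl \<delta> \<beta>) < height \<beta>"
      using positive_root_descent less.prems by blast
    have "{\<gamma>\<in>R. height \<gamma> < height (refl \<delta> \<beta>)} \<subset> {\<gamma>\<in>R. height \<gamma> < height \<beta>}"
      using \<delta>(2,3) unfolding positive_roots_def by auto
    then have "card {\<gamma>\<in>R. height \<gamma> < height (refl \<delta> \<beta>)} < card {\<gamma>\<in>R. height \<gamma> < height \<beta>}"
      using root_system by (intro psubset_card_mono) (simp_all add: root_system_def)
    then obtain ws \<delta>' where ws: "set ws \<subseteq> S" "\<delta>' \<in> \<Delta>" "refl \<delta> \<beta> = word_prod ws \<delta>'"
      using less.hyps \<delta>(2) by blast
    then have "\<beta> = word_prod (refl \<delta> # ws) \<delta>'"
      by (metis comp_apply refl_refl word_prod_Cons)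
    then show ?thesis
      using ws(1,2) \<delta>(1) by (intro exI[of _ "refl \<delta> # ws"] exI[of _ \<delta>']) auto
  qed
qed

lemma refl_root_word:
  assumes "\<beta> \<in> R"
  obtains ws where "set ws \<subseteq> S" "word_prod ws = refl \<beta>"
proof -
  obtain \<beta>' where "\<beta>' \<in> positive_roots R \<Delta>" "refl \<beta>' = refl \<beta>"
    using root_positive_or_negative[OF assms] refl_uminus by metis
  then obtain ws \<delta> where ws: "set ws \<subseteq> S" "\<delta> \<in> \<Delta>" "refl \<beta> = refl (word_prod ws \<delta>)"
    using positive_root_conj_simple by metis
  moreover have "set ws \<subseteq> range refl"
    using ws(1) by auto
  ultimately have "refl \<beta> = word_prod (ws @ refl \<delta> # rev ws)"
    by (simp add: refl_word_prod_conj o_assoc)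
  moreover have "set (ws @ refl \<delta> # rev ws) \<subseteq> S"
    using ws(1,2) by auto
  ultimately show thesis
    using that by metis
qed

lemma weyl_group_word:
  assumes "u \<in> weyl_group R"
  obtains ws where "set ws \<subseteq> S" "word_prod ws = u"
  using assms
proof (induction arbitrary: thesis)
  case weyl_id
  then show ?case
    using weyl_id.prems[of "[]"] by simp
next
  case (weyl_step \<alpha> w)
  obtain ws vs where "set ws \<subseteq> S" "word_prod ws = w" "set vs \<subseteq> S" "word_prod vs = refl \<alpha>"
    using weyl_step refl_root_word by metis
  then show ?case
    using weyl_step.prems[of "vs @ ws"] by simp
qed

lemma weyl_group_reduced_word:
  assumes "u \<in> weyl_group R"
  obtains ws where "reduced_word \<Delta> ws u"
  using weyl_group_word[OF assms] reduced_word_exists by metis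

lemma weyl_group_image_roots: "u \<in> weyl_group R \<Longrightarrow> u ` R = R"
  by (induction rule: weyl_group.induct) (simp, metis image_comp refl_image_roots)

lemma linear_weyl_group: "u \<in> weyl_group R \<Longrightarrow> linear u"
  by (induction rule: weyl_group.induct) (metis linear_id, metis linear_compose linear_refl)

lemma bij_weyl_group: "u \<in> weyl_group R \<Longrightarrow> bij u"
  by (induction rule: weyl_group.induct) (metis bij_id, metis bij_comp bij_refl)

(* "u^-1 beta is positive" is expressed as beta \<in> u ` positive_roots R \<Delta>,
   "u^-1 beta is negative" as - beta \<in> u ` positive_roots R \<Delta>. *)
lemma weyl_group_root_sign:
  assumes "u \<in> weyl_group R" "\<beta> \<in> R"
  shows "\<beta> \<in> u ` positive_roots R \<Delta> \<or> - \<beta> \<in> u ` positive_roots R \<Delta>"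
proof -
  obtain \<gamma> where "\<gamma> \<in> R" "\<beta> = u \<gamma>"
    using assms weyl_group_image_roots by blast
  moreover have "- \<beta> = u (- \<gamma>)"
    using \<open>\<beta> = u \<gamma>\<close> linear_neg[OF linear_weyl_group[OF assms(1)]] by simp
  ultimately show ?thesis
    using root_positive_or_negative by blast
qed

lemma strong_exchange:
  assumes "set ws \<subseteq> S" "\<beta> \<in> positive_roots R \<Delta>" "- \<beta> \<in> word_prod ws ` positive_roots R \<Delta>"
  shows "\<exists>us. subseq us ws \<and> length ws = Suc (length us) \<and> word_prod us = refl \<beta> \<circ> word_prod ws"
  using assms
proof (induction ws arbitrary: \<beta>)
  case Nil
  then show ?case
    using positive_root_uminus by auto
next
  case (Cons s ws)
  then obtain \<delta> \<gamma> where \<delta>: "\<delta> \<in> \<Delta>" "s = refl \<delta>"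
    and \<gamma>: "\<gamma> \<in> positive_roots R \<Delta>" "- \<beta> = refl \<delta> (word_prod ws \<gamma>)"
    by auto
  show ?case
  proof (cases "\<beta> = \<delta>")
    case True
    have "refl \<beta> \<circ> word_prod (s # ws) = (refl \<delta> \<circ> refl \<delta>) \<circ> word_prod ws"
      using \<open>\<beta> = \<delta>\<close> \<delta>(2) by (simp only: word_prod_Cons o_assoc)
    then have "word_prod ws = refl \<beta> \<circ> word_prod (s # ws)"
      by simp
    moreover have "subseq ws (s # ws)"
      by (rule list_emb_Cons) (rule subseq_order.order_refl)
    ultimately show ?thesis
      by (metis length_Cons)
  next
    case False
    have "set ws \<subseteq> S"
      using Cons.prems(1) by simp
    moreover have "refl \<delta> \<beta> \<in> positive_roots R \<Delta>"
      using refl_simple_positive \<delta>(1) Cons.prems(2) False by blast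
    moreover have "- refl \<delta> \<beta> \<in> word_prod ws ` positive_roots R \<Delta>"
      using \<gamma> by (metis image_eqI refl_minus refl_refl)
    ultimately obtain us where us: "subseq us ws" "length ws = Suc (length us)"
      "word_prod us = refl (refl \<delta> \<beta>) \<circ> word_prod ws"
      using Cons.IH by blast
    have "word_prod (s # us) = refl \<beta> \<circ> word_prod (s # ws)"
      using us(3) \<delta>(2) by (simp add: refl_refl_conj fun_eq_iff)
    moreover have "subseq (s # us) (s # ws)"
      using us(1) by simp
    ultimately show ?thesis
      using us(2) by (metis length_Cons)
  qed
qed

lemma coxeter_length_refl_less:
  assumes "u \<in> weyl_group R" "\<beta> \<in> positive_roots R \<Delta>" "- \<beta> \<in> u ` positive_roots R \<Delta>"
  shows "coxeter_length \<Delta> (refl \<beta> \<circ> u) < coxeter_length \<Delta> u"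
proof -
  obtain ws where ws: "reduced_word \<Delta> ws u"
    using weyl_group_reduced_word[OF assms(1)] .
  then obtain us where us: "subseq us ws" "length ws = Suc (length us)" "word_prod us = refl \<beta> \<circ> u"
    using strong_exchange assms(2,3) unfolding reduced_word_def by metis
  have "set us \<subseteq> S"
    using ws us(1) set_mono_subseq unfolding reduced_word_def by blast
  then have "coxeter_length \<Delta> (refl \<beta> \<circ> u) \<le> length us"
    using coxeter_length_le us(3) by metis
  then show ?thesis
    using ws us(2) unfolding reduced_word_def by simp
qed

lemma coxeter_length_refl_greater:
  assumes "u \<in> weyl_group R" "\<beta> \<in> positive_roots R \<Delta>" "\<beta> \<in> u ` positive_roots R \<Delta>"
  shows "coxeter_length \<Delta> u < coxeter_length \<Delta> (refl \<beta> \<circ> u)"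
proof -
  have "refl \<beta> \<circ> u \<in> weyl_group R"
    using assms(1,2) weyl_step unfolding positive_roots_def by blast
  moreover have "- \<beta> \<in> (refl \<beta> \<circ> u) ` positive_roots R \<Delta>"
    using assms(3) by force
  ultimately have "coxeter_length \<Delta> (refl \<beta> \<circ> (refl \<beta> \<circ> u)) < coxeter_length \<Delta> (refl \<beta> \<circ> u)"
    using coxeter_length_refl_less assms(2) by blast
  then show ?thesis
    by (simp add: o_assoc)
qed

lemma coxeter_length_refl_less_iff:
  assumes "u \<in> weyl_group R" "\<beta> \<in> positive_roots R \<Delta>"
  shows "coxeter_length \<Delta> (refl \<beta> \<circ> u) < coxeter_length \<Delta> u \<longleftrightarrow> - \<beta> \<in> u ` positive_roots R \<Delta>"
  using coxeter_length_refl_less[OF assms] coxeter_length_refl_greater[OF assms]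
    weyl_group_root_sign[OF assms(1), of \<beta>] assms(2)
  unfolding positive_roots_def by fastforce

lemma bruhat_lt_refl:
  assumes "u \<in> weyl_group R" "\<beta> \<in> positive_roots R \<Delta>"
    and len: "coxeter_length \<Delta> (refl \<beta> \<circ> u) = coxeter_length \<Delta> u + 1"
  shows "bruhat_lt \<Delta> u (refl \<beta> \<circ> u)"
proof -
  define v where "v = refl \<beta> \<circ> u"
  have v: "v \<in> weyl_group R"
    using assms(1,2) weyl_step unfolding v_def positive_roots_def by blast
  have u: "refl \<beta> \<circ> v = u"
    by (simp add: v_def fun_eq_iff)
  then have "- \<beta> \<in> v ` positive_roots R \<Delta>"
    using coxeter_length_refl_less_iff[OF v assms(2)] len by (simp add: v_def)
  moreover obtain vs where vs: "reduced_word \<Delta> vs v"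
    using weyl_group_reduced_word[OF v] .
  ultimately obtain us where us: "subseq us vs" "length vs = Suc (length us)" "word_prod us = u"
    using strong_exchange assms(2) u unfolding reduced_word_def by metis
  have "reduced_word \<Delta> us u"
    using vs us len set_mono_subseq unfolding reduced_word_def v_def by fastforce
  then have "bruhat_le \<Delta> u v"
    using vs us(1) unfolding bruhat_le_def by blast
  moreover have "u \<noteq> v"
    using len v_def by force
  ultimately show ?thesis
    unfolding bruhat_lt_def v_def by blast
qed

lemma reduced_word_Cons_simple:
  assumes "v \<in> weyl_group R" "\<delta> \<in> \<Delta>" "- \<delta> \<in> v ` positive_roots R \<Delta>"
  obtains us where "reduced_word \<Delta> (refl \<delta> # us) v"
proof -
  obtain vs where vs: "reduced_word \<Delta> vs v"
    using weyl_group_reduced_word[OF assms(1)] .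
  then obtain us where us: "subseq us vs" "length vs = Suc (length us)"
      "word_prod us = refl \<delta> \<circ> v"
    using strong_exchange assms(2,3) simple_root_positive unfolding reduced_word_def by metis
  have "word_prod (refl \<delta> # us) = v"
    using us(3) by (simp add: fun_eq_iff)
  moreover have "set (refl \<delta> # us) \<subseteq> S"
    using vs us(1) assms(2) set_mono_subseq unfolding reduced_word_def by fastforce
  ultimately have "reduced_word \<Delta> (refl \<delta> # us) v"
    using vs us(2) by (intro reduced_wordI) (simp_all add: reduced_word_def)
  then show thesis
    by (rule that)
qed

lemma coxeter_length_two_descents:
  assumes "v \<in> weyl_group R" "\<alpha> \<in> positive_roots R \<Delta>" "\<delta> \<in> \<Delta>" "refl \<delta> \<noteq> refl \<alpha>"
    and "- \<alpha> \<in> v ` positive_roots R \<Delta>" "- \<delta> \<in> v ` positive_roots R \<Delta>"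
  shows "coxeter_length \<Delta> (refl \<delta> \<circ> (refl \<alpha> \<circ> v)) + 2 \<le> coxeter_length \<Delta> v"
proof -
  obtain us where red: "reduced_word \<Delta> (refl \<delta> # us) v"
    using reduced_word_Cons_simple assms(1,3,6) by blast
  then obtain xs where xs: "subseq xs (refl \<delta> # us)" "length us = length xs"
      "word_prod xs = refl \<alpha> \<circ> v"
    using strong_exchange[of "refl \<delta> # us" \<alpha>] assms(2,5) unfolding reduced_word_def by force
  from subseq_Cons_same_length[OF xs(1) xs(2)[symmetric]] show ?thesis
  proof
    assume "xs = us"
    have "word_prod us = refl \<delta> \<circ> v"
      using red unfolding reduced_word_def by (simp add: refl_comp_eq_iff)
    then have "refl \<alpha> \<circ> v = refl \<delta> \<circ> v"
      using \<open>xs = us\<close> xs(3) by simp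
    then have "refl \<alpha> = refl \<delta>"
      using bij_weyl_group[OF assms(1)] by (metis bij_is_surj surj_fun_eq UNIV_I)
    with assms(4) show ?thesis
      by simp
  next
    assume "\<exists>xs'. xs = refl \<delta> # xs' \<and> subseq xs' us"
    then obtain xs' where xs': "xs = refl \<delta> # xs'" "subseq xs' us"
      by blast
    then have "refl \<delta> \<circ> (refl \<alpha> \<circ> v) = word_prod xs'"
      using xs(3) by (simp add: refl_comp_eq_iff)
    moreover have "set xs' \<subseteq> S"
      using red xs'(2) set_mono_subseq unfolding reduced_word_def by fastforce
    ultimately have "coxeter_length \<Delta> (refl \<delta> \<circ> (refl \<alpha> \<circ> v)) \<le> length xs'"
      using coxeter_length_le by metis
    then show ?thesis
      using red xs(2) xs'(1) unfolding reduced_word_def by simp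
  qed
qed

lemma coxeter_length_simple_refl:
  assumes "u \<in> weyl_group R" "\<alpha> \<in> positive_roots R \<Delta>" "\<delta> \<in> \<Delta>" "refl \<delta> \<noteq> refl \<alpha>"
    and len_\<alpha>: "coxeter_length \<Delta> (refl \<alpha> \<circ> u) = coxeter_length \<Delta> u + 1"
    and len_\<delta>: "coxeter_length \<Delta> u \<le> coxeter_length \<Delta> (refl \<delta> \<circ> u)"
  shows "coxeter_length \<Delta> (refl \<delta> \<circ> (refl \<alpha> \<circ> u)) = coxeter_length \<Delta> (refl \<alpha> \<circ> u) + 1"
proof -
  define v where "v = refl \<alpha> \<circ> u"
  have v: "v \<in> weyl_group R"
    using assms(1,2) weyl_step unfolding v_def positive_roots_def by blast
  have u: "refl \<alpha> \<circ> v = u"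
    by (simp add: v_def refl_comp_eq_iff)
  have "- \<alpha> \<in> v ` positive_roots R \<Delta>"
    using coxeter_length_refl_less_iff[OF v assms(2)] u len_\<alpha> by (simp add: v_def)
  moreover have "- \<delta> \<notin> v ` positive_roots R \<Delta>"
  proof
    assume "- \<delta> \<in> v ` positive_roots R \<Delta>"
    then have "coxeter_length \<Delta> (refl \<delta> \<circ> u) + 2 \<le> coxeter_length \<Delta> v"
      using coxeter_length_two_descents[OF v assms(2-4) \<open>- \<alpha> \<in> _\<close>] u by simp
    then show False
      using len_\<alpha> len_\<delta> by (simp add: v_def)
  qed
  ultimately have "\<delta> \<in> v ` positive_roots R \<Delta>"
    using weyl_group_root_sign[OF v] assms(3) simple_roots_subset by blast
  then have "coxeter_length \<Delta> v < coxeter_length \<Delta> (refl \<delta> \<circ> v)"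
    using coxeter_length_refl_greater[OF v simple_root_positive[OF assms(3)]] by blast
  moreover have "coxeter_length \<Delta> (refl \<delta> \<circ> v) \<le> coxeter_length \<Delta> v + 1"
    using coxeter_length_simple_le[OF assms(3)] weyl_group_reduced_word[OF v] by metis
  ultimately show ?thesis
    unfolding v_def by simp
qed

end

theorem mainTheorem12:
  fixes R \<Delta> :: "'a::euclidean_space set" and \<alpha> :: 'a and w :: "'a \<Rightarrow> 'a"
  assumes "root_system R"
    and "simple_system R \<Delta>"
    and "\<alpha> \<in> positive_roots R \<Delta>"
    and "w \<in> weyl_group R"
    and "coxeter_length \<Delta> (refl \<alpha> \<circ> w) = coxeter_length \<Delta> w + 1"
  shows "bruhat_lt \<Delta> w (refl \<alpha> \<circ> w)
    \<and> (\<forall>\<delta>\<in>\<Delta>. refl \<delta> \<noteq> refl \<alpha> \<and> bruhat_lt \<Delta> w (refl \<delta> \<circ> w)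
          \<longrightarrow> bruhat_lt \<Delta> (refl \<alpha> \<circ> w) (refl \<delta> \<circ> (refl \<alpha> \<circ> w)))"
proof -
  interpret based_root_system R \<Delta>
    using assms(1,2) by unfold_locales
  have "bruhat_lt \<Delta> (refl \<alpha> \<circ> w) (refl \<delta> \<circ> (refl \<alpha> \<circ> w))"
    if "\<delta> \<in> \<Delta>" "refl \<delta> \<noteq> refl \<alpha>" "bruhat_lt \<Delta> w (refl \<delta> \<circ> w)" for \<delta>
  proof (rule bruhat_lt_refl)
    show "refl \<alpha> \<circ> w \<in> weyl_group R"
      using assms(3,4) weyl_step unfolding positive_roots_def by blast
    show "\<delta> \<in> positive_roots R \<Delta>"
      using that(1) by (rule simple_root_positive)
    show "coxeter_length \<Delta> (refl \<delta> \<circ> (refl \<alpha> \<circ> w)) = coxeter_length \<Delta> (refl \<alpha> \<circ> w) + 1"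
      using coxeter_length_simple_refl assms(3-5) that bruhat_le_coxeter_length_le
      unfolding bruhat_lt_def by blast
  qed
  then show ?thesis
    using bruhat_lt_refl assms(3-5) by blast
qed

end
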